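(* Let ${\bf A}=(a(i,j))$ be a real $n\times n$ matrix with no zero row, and suppose the associated matrix ${\bf A}_{\rm sde}$ has $1$ as a simple eigenvalue and all other eigenvalues in the open unit complex disk. Let ${\bf a}_{\rm sde}\in\mathbb{R}^{2n}$ be the vector with ${\bf a}_{\rm sde}^T{\bf A}_{\rm sde}={\bf a}_{\rm sde}^T$ and ${\bf a}_{\rm sde}^T{\bf 1}_{2n}=1$, let ${\bf w}=(w_1,\dots,w_n,w_1,\dots,w_n)^T$ and $\tilde w={\bf a}_{\rm sde}^T{\bf w}$. Then $$0<\min_{1\le i\le n}w_i\le\tilde w\le\max_{1\le i\le n}w_i.$$
   Context: $t_+=\max(t,0)$; $w_i=\big(\sum_{j=1}^n|a(i,j)|\big)^{-1}$; $\tilde a(i,j)=w_ia(i,j)$; $\tilde{\bf A}_+=\big((\tilde a(i,j))_+\big)$, $\tilde{\bf A}_-=\big((-\tilde a(i,j))_+\big)$; ${\bf A}_{\rm sde}=\begin{pmatrix}\tilde{\bf A}_+&\tilde{\bf A}_-\\ \tilde{\bf A}_+&\tilde{\bf A}_-\end{pmatrix}$; ${\bf 1}_{2n}$ is the all-ones vector. *)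

theory Defs
  imports "Jordan_Normal_Form.Char_Poly" "HOL-Computational_Algebra.Polynomial"
begin

definition row_weight :: "real mat \<Rightarrow> nat \<Rightarrow> real" where
  "row_weight A i = inverse (\<Sum>j<dim_col A. \<bar>A $$ (i,j)\<bar>)"

definition A_tilde :: "real mat \<Rightarrow> real mat" where
  "A_tilde A = mat (dim_row A) (dim_col A) (\<lambda>(i,j). row_weight A i * A $$ (i,j))"

definition A_tilde_plus :: "real mat \<Rightarrow> real mat" where
  "A_tilde_plus A = mat (dim_row A) (dim_col A) (\<lambda>(i,j). max (A_tilde A $$ (i,j)) 0)"

definition A_tilde_minus :: "real mat \<Rightarrow> real mat" where
  "A_tilde_minus A = mat (dim_row A) (dim_col A) (\<lambda>(i,j). max (- (A_tilde A $$ (i,j))) 0)"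

definition A_sde :: "real mat \<Rightarrow> real mat" where
  "A_sde A = four_block_mat (A_tilde_plus A) (A_tilde_minus A) (A_tilde_plus A) (A_tilde_minus A)"

definition simple_eigenvalue :: "complex mat \<Rightarrow> complex \<Rightarrow> bool" where
  "simple_eigenvalue M z \<longleftrightarrow> eigenvalue M z \<and> order z (char_poly M) = 1"

end

(* Dividing each row of |A| by its sum makes A_sde row stochastic. For a row-stochastic P,
   a left fixed vector a satisfies |a| <= P^T |a| entrywise, and both sides have the same total
   mass, so |a|, and with it the positive and negative parts a+ and a-, are left fixed as well.
   Having disjoint supports, a+ and a- would be linearly independent eigenvectors for the
   eigenvalue 1 if both were nonzero, whereas its geometric multiplicity is at most its
   algebraic multiplicity 1. As the entries of a sum to 1, a- = 0, so a is a probability vector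
   and a^T w is a convex combination of the w_i. *)

theory Submission
  imports Defs Jordan_Normal_Form.Jordan_Normal_Form_Existence Jordan_Normal_Form.Jordan_Normal_Form_Uniqueness
begin

lemma kernel_dim_char_matrix_le_order:
  fixes M :: "complex mat"
  assumes M: "M \<in> carrier_mat N N"
  shows "kernel_dim (char_matrix M e) \<le> Polynomial.order e (char_poly M)"
proof -
  obtain as where "char_poly M = (\<Prod>a \<leftarrow> as. [:- a, 1:])"
    using char_poly_factorized[OF M] by auto
  then obtain n_as where J: "jordan_nf M n_as"
    using jordan_nf_exists[OF M] by blast
  have "kernel_dim (char_matrix M e) = dim_gen_eigenspace M e 1"
    unfolding dim_gen_eigenspace_def by simp
  also have "\<dots> = (\<Sum>n \<leftarrow> map fst [(n, x)\<leftarrow>n_as. x = e]. min 1 n)"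
    by (rule dim_gen_eigenspace[OF J])
  also have "\<dots> \<le> (\<Sum>n \<leftarrow> map fst [(n, x)\<leftarrow>n_as. x = e]. n)"
    by (rule sum_list_mono) auto
  also have "\<dots> = Polynomial.order e (char_poly M)"
    unfolding jordan_nf_order[OF J] by (induct n_as) auto
  finally show ?thesis .
qed

lemma (in kernel) lin_indpt_of_crossed_supports:
  assumes p: "p \<in> mat_kernel A" and q: "q \<in> mat_kernel A"
    and i: "i < nc" and j: "j < nc"
    and "p $ i \<noteq> 0" "q $ i = 0" "q $ j \<noteq> 0" "p $ j = 0"
  shows "lin_indpt {p, q}"
proof
  assume "lin_dep {p, q}"
  then obtain U c v where U: "finite U" "U \<subseteq> {p, q}" and lc: "lincomb c U = 0\<^sub>v nc"
    and v: "v \<in> U" "c v \<noteq> 0"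
    unfolding Ker.lin_dep_def by auto
  have coord: "(\<Sum>x\<in>U. c x * x $ k) = 0" if "k < nc" for k
    using lincomb_index[OF that, of U c] lc that U p q by auto
  have "p \<noteq> q" using assms by auto
  moreover have "U = {} \<or> U = {p} \<or> U = {q} \<or> U = {p, q}" using U by blast
  ultimately show False
    using coord[OF i] coord[OF j] v assms by (elim disjE) auto
qed

lemma simple_eigenvalue_no_crossed_eigenvectors:
  fixes M :: "complex mat"
  assumes M: "M \<in> carrier_mat N N" and simple: "Polynomial.order e (char_poly M) = 1"
    and p: "p \<in> carrier_vec N" "M *\<^sub>v p = e \<cdot>\<^sub>v p"
    and q: "q \<in> carrier_vec N" "M *\<^sub>v q = e \<cdot>\<^sub>v q"
    and i: "i < N" and j: "j < N"
    and supp: "p $ i \<noteq> 0" "q $ i = 0" "q $ j \<noteq> 0" "p $ j = 0"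
  shows False
proof -
  interpret K: kernel N N "char_matrix M e"
    by unfold_locales (rule char_matrix_closed[OF M])
  have "eigenvector M p e" "eigenvector M q e"
    using M p q i j supp unfolding eigenvector_def by auto
  then have ker: "p \<in> mat_kernel (char_matrix M e)" "q \<in> mat_kernel (char_matrix M e)"
    using eigenvector_char_matrix[OF M] by (auto intro: mat_kernelI[OF char_matrix_closed[OF M]])
  obtain B where "finite B" "K.basis B"
    using kernel_basis_exists[OF char_matrix_closed[OF M]] by blast
  then have "K.Ker.fin_dim"
    unfolding K.Ker.fin_dim_def K.Ker.basis_def by auto
  then have "card {p, q} \<le> K.Ker.dim"
    using K.Ker.li_le_dim(2) K.lin_indpt_of_crossed_supports[OF ker i j supp] ker by auto
  moreover have "K.Ker.dim \<le> 1"
    using kernel_dim_char_matrix_le_order[OF M, of e] simple by simp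
  moreover have "p \<noteq> q" using supp by auto
  ultimately show False by simp
qed

definition row_stochastic :: "real mat \<Rightarrow> bool" where
  "row_stochastic P \<longleftrightarrow> (\<forall>k<dim_row P. \<forall>l<dim_col P. 0 \<le> P $$ (k, l))
     \<and> (\<forall>k<dim_row P. (\<Sum>l<dim_col P. P $$ (k, l)) = 1)"

lemma index_transpose_mult_mat_vec:
  fixes P :: "'a::comm_semiring_0 mat"
  assumes "P \<in> carrier_mat N N" "v \<in> carrier_vec N" "l < N"
  shows "(transpose_mat P *\<^sub>v v) $ l = (\<Sum>k<N. P $$ (k, l) * v $ k)"
  using assms by (auto simp: scalar_prod_def lessThan_atLeast0 intro!: sum.cong)

lemma row_stochastic_left_fixed_abs:
  assumes P: "P \<in> carrier_mat N N" "row_stochastic P"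
    and a: "a \<in> carrier_vec N" "transpose_mat P *\<^sub>v a = a"
  shows "transpose_mat P *\<^sub>v map_vec abs a = map_vec abs a"
proof -
  define b where "b l = (\<Sum>k<N. P $$ (k, l) * \<bar>a $ k\<bar>)" for l
  have nonneg: "0 \<le> P $$ (k, l)" if "k < N" "l < N" for k l
    using P that unfolding row_stochastic_def by auto
  have abs_le: "\<bar>a $ l\<bar> \<le> b l" if l: "l < N" for l
  proof -
    have "\<bar>a $ l\<bar> = \<bar>\<Sum>k<N. P $$ (k, l) * a $ k\<bar>"
      using index_transpose_mult_mat_vec[OF P(1) a(1) l] a(2) by simp
    also have "\<dots> \<le> (\<Sum>k<N. \<bar>P $$ (k, l) * a $ k\<bar>)" by (rule sum_abs)
    also have "\<dots> = b l"
      unfolding b_def by (rule sum.cong) (use nonneg l in \<open>auto simp: abs_mult\<close>)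
    finally show ?thesis .
  qed
  have "(\<Sum>l<N. b l) = (\<Sum>k<N. \<bar>a $ k\<bar> * (\<Sum>l<N. P $$ (k, l)))"
    unfolding b_def by (subst sum.swap) (simp add: sum_distrib_left mult.commute)
  also have "\<dots> = (\<Sum>k<N. \<bar>a $ k\<bar>)"
    using P unfolding row_stochastic_def by simp
  finally have "(\<Sum>l<N. b l - \<bar>a $ l\<bar>) = 0" by (simp add: sum_subtractf)
  then have "b l = \<bar>a $ l\<bar>" if "l < N" for l
    using sum_nonneg_eq_0_iff[of "{..<N}" "\<lambda>l. b l - \<bar>a $ l\<bar>"] abs_le that by auto
  moreover have "(transpose_mat P *\<^sub>v map_vec abs a) $ l = b l" if l: "l < N" for l
  proof -
    have "(transpose_mat P *\<^sub>v map_vec abs a) $ l = (\<Sum>k<N. P $$ (k, l) * map_vec abs a $ k)"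
      by (rule index_transpose_mult_mat_vec) (use P a l in auto)
    also have "\<dots> = b l"
      unfolding b_def by (rule sum.cong) (use a in auto)
    finally show ?thesis .
  qed
  ultimately show ?thesis
    using P(1) a(1) by (intro eq_vecI) auto
qed

lemma row_stochastic_left_fixed_pos_part:
  assumes P: "P \<in> carrier_mat N N" "row_stochastic P"
    and a: "a \<in> carrier_vec N" "transpose_mat P *\<^sub>v a = a"
  shows "transpose_mat P *\<^sub>v map_vec (\<lambda>x. max x 0) a = map_vec (\<lambda>x. max x 0) a"
proof -
  have pos_part: "map_vec (\<lambda>x. max x 0) a = (1 / 2) \<cdot>\<^sub>v (map_vec abs a + a)"
    using a(1) by (intro eq_vecI) (auto simp: max_def)
  have PT: "transpose_mat P \<in> carrier_mat N N" using P(1) by simp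
  have abs_a: "map_vec abs a \<in> carrier_vec N" using a(1) by simp
  show ?thesis
    unfolding pos_part mult_mat_vec[OF PT add_carrier_vec[OF abs_a a(1)]]
    using mult_add_distrib_mat_vec[OF PT abs_a a(1)] row_stochastic_left_fixed_abs[OF P a] a(2)
    by simp
qed

lemma row_stochastic_simple_eigenvalue_left_fixed_nonneg:
  assumes P: "P \<in> carrier_mat N N" "row_stochastic P"
    and simple: "Polynomial.order 1 (char_poly (map_mat complex_of_real P)) = 1"
    and a: "a \<in> carrier_vec N" "transpose_mat P *\<^sub>v a = a"
    and mass: "0 < (\<Sum>k<N. a $ k)"
    and k: "k < N"
  shows "0 \<le> a $ k"
proof (rule ccontr)
  assume neg: "\<not> 0 \<le> a $ k"
  obtain i where i: "i < N" "0 < a $ i"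
    using mass sum_nonpos[of "{..<N}" "\<lambda>k. a $ k"] by (meson lessThan_iff not_le)
  define M where "M = map_mat complex_of_real (transpose_mat P)"
  have M: "M \<in> carrier_mat N N" using P unfolding M_def by simp
  have "M = transpose_mat (map_mat complex_of_real P)"
    unfolding M_def by (simp add: map_mat_transpose)
  then have simple_M: "Polynomial.order 1 (char_poly M) = 1"
    using P(1) simple by (simp add: char_poly_transpose_mat[of _ N])
  have fixed: "M *\<^sub>v map_vec complex_of_real v = 1 \<cdot>\<^sub>v map_vec complex_of_real v"
    if "v \<in> carrier_vec N" "transpose_mat P *\<^sub>v v = v" for v
  proof -
    have "M *\<^sub>v map_vec complex_of_real v = map_vec complex_of_real (transpose_mat P *\<^sub>v v)"
      unfolding M_def by (rule of_real_hom.mult_mat_vec_hom[symmetric]) (use P that in auto)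
    then show ?thesis using that by simp
  qed
  define p where "p = map_vec (\<lambda>x. max x 0) a"
  define q where "q = p - a"
  have p: "p \<in> carrier_vec N" "transpose_mat P *\<^sub>v p = p"
    using row_stochastic_left_fixed_pos_part[OF P a] a unfolding p_def by auto
  have q: "q \<in> carrier_vec N" "transpose_mat P *\<^sub>v q = q"
    using mult_minus_distrib_mat_vec[of "transpose_mat P" N N p a] P(1) p a
    unfolding q_def by auto
  show False
    using simple_eigenvalue_no_crossed_eigenvectors[OF M simple_M _ fixed[OF p] _ fixed[OF q] i(1) k]
      p(1) q(1) i neg k a(1) unfolding q_def p_def by auto
qed

lemma row_weight_pos:
  assumes A: "A \<in> carrier_mat n n" and i: "i < n" and j: "j < n" "A $$ (i, j) \<noteq> 0"
  shows "0 < row_weight A i"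
proof -
  have "0 < \<bar>A $$ (i, j)\<bar>" using j by simp
  also have "\<dots> \<le> (\<Sum>j<n. \<bar>A $$ (i, j)\<bar>)"
    by (rule member_le_sum) (use j in auto)
  finally show ?thesis unfolding row_weight_def using A by simp
qed

lemma A_sde_carrier: "A \<in> carrier_mat n n \<Longrightarrow> A_sde A \<in> carrier_mat (2 * n) (2 * n)"
  unfolding A_sde_def A_tilde_plus_def A_tilde_minus_def A_tilde_def by (auto simp: mult_2)

lemma index_A_sde:
  assumes A: "A \<in> carrier_mat n n" and k: "k < 2 * n" and l: "l < 2 * n"
  shows "A_sde A $$ (k, l) =
    (if l < n then max (row_weight A (k mod n) * A $$ (k mod n, l)) 0
     else max (- (row_weight A (k mod n) * A $$ (k mod n, l - n))) 0)"
proof -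
  have "k mod n = (if k < n then k else k - n)"
    using k by (simp add: mod_if le_mod_geq)
  then show ?thesis
    using A k l unfolding A_sde_def A_tilde_plus_def A_tilde_minus_def A_tilde_def
    by (auto simp: index_mat_four_block)
qed

lemma sum_lessThan_double:
  fixes f :: "nat \<Rightarrow> 'a::comm_monoid_add"
  shows "(\<Sum>l<2 * n. f l) = (\<Sum>l<n. f l) + (\<Sum>l<n. f (l + n))"
proof -
  have "{..<2 * n} = {..<n} \<union> {n..<n + n}" by auto
  then have "(\<Sum>l<2 * n. f l) = (\<Sum>l<n. f l) + (\<Sum>l\<in>{n..<n + n}. f l)"
    by (simp add: sum.union_disjoint ivl_disj_int)
  also have "(\<Sum>l\<in>{n..<n + n}. f l) = (\<Sum>l<n. f (l + n))"
    using sum.shift_bounds_nat_ivl[of f 0 n n] by (simp add: lessThan_atLeast0)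
  finally show ?thesis .
qed

lemma A_sde_row_stochastic:
  assumes A: "A \<in> carrier_mat n n" and no_zero_row: "\<forall>i<n. \<exists>j<n. A $$ (i, j) \<noteq> 0"
  shows "row_stochastic (A_sde A)"
  unfolding row_stochastic_def
proof (intro conjI allI impI)
  fix k l assume "k < dim_row (A_sde A)" "l < dim_col (A_sde A)"
  then show "0 \<le> A_sde A $$ (k, l)"
    using A_sde_carrier[OF A] index_A_sde[OF A] by auto
next
  fix k assume "k < dim_row (A_sde A)"
  then have k: "k < 2 * n" using A_sde_carrier[OF A] by simp
  define i where "i = k mod n"
  define w where "w = row_weight A i"
  have i: "i < n" unfolding i_def using k by simp
  have w: "0 < w" unfolding w_def using row_weight_pos[OF A i] no_zero_row i by blast
  have "(\<Sum>l<2 * n. A_sde A $$ (k, l))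
      = (\<Sum>l<n. max (w * A $$ (i, l)) 0 + max (- (w * A $$ (i, l))) 0)"
    unfolding sum_lessThan_double sum.distrib using k
    by (intro arg_cong2[where f = "(+)"] sum.cong) (auto simp: index_A_sde[OF A] i_def w_def)
  also have "\<dots> = w * (\<Sum>l<n. \<bar>A $$ (i, l)\<bar>)"
    unfolding sum_distrib_left
    by (rule sum.cong) (use w in \<open>auto simp: max_def abs_if zero_le_mult_iff mult_le_0_iff\<close>)
  also have "\<dots> = 1"
    using w A unfolding w_def row_weight_def by simp
  finally show "(\<Sum>l<dim_col (A_sde A). A_sde A $$ (k, l)) = 1"
    using A_sde_carrier[OF A] by simp
qed

lemma convex_combination_between_Min_Max:
  fixes c f :: "'a \<Rightarrow> 'b::linordered_idom"
  assumes S: "finite S" "f ` K \<subseteq> S" and c: "\<forall>k\<in>K. 0 \<le> c k" "sum c K = 1"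
  shows "Min S \<le> (\<Sum>k\<in>K. c k * f k) \<and> (\<Sum>k\<in>K. c k * f k) \<le> Max S"
proof -
  have "K \<noteq> {}" using c(2) by auto
  then have "S \<noteq> {}" using S(2) by auto
  have "Min S = (\<Sum>k\<in>K. c k * Min S)" using c(2) by (simp add: sum_distrib_right[symmetric])
  also have "\<dots> \<le> (\<Sum>k\<in>K. c k * f k)"
    by (intro sum_mono mult_left_mono) (use S c in auto)
  finally have "Min S \<le> (\<Sum>k\<in>K. c k * f k)" .
  moreover have "(\<Sum>k\<in>K. c k * f k) \<le> (\<Sum>k\<in>K. c k * Max S)"
    by (intro sum_mono mult_left_mono) (use S c in auto)
  moreover have "\<dots> = Max S" using c(2) by (simp add: sum_distrib_right[symmetric])
  ultimately show ?thesis by simp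
qed

theorem lemma1:
  fixes A :: "real mat" and n :: nat and a :: "real vec"
  assumes A_dim: "A \<in> carrier_mat n n"
    and no_zero_row: "\<forall>i<n. \<exists>j<n. A $$ (i,j) \<noteq> 0"
    and simple1: "simple_eigenvalue (map_mat complex_of_real (A_sde A)) 1"
    and others: "\<forall>z. eigenvalue (map_mat complex_of_real (A_sde A)) z \<longrightarrow> z \<noteq> 1 \<longrightarrow> cmod z < 1"
    and a_dim: "a \<in> carrier_vec (2*n)"
    and a_left: "transpose_mat (A_sde A) *\<^sub>v a = a"
    and a_sum: "(\<Sum>k<2*n. a $ k) = 1"
  shows "0 < Min {row_weight A i | i. i < n}
       \<and> Min {row_weight A i | i. i < n} \<le> a \<bullet> vec (2*n) (\<lambda>k. row_weight A (k mod n))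
       \<and> a \<bullet> vec (2*n) (\<lambda>k. row_weight A (k mod n)) \<le> Max {row_weight A i | i. i < n}"
proof -
  define S where "S = {row_weight A i | i. i < n}"
  have "0 < n" using a_sum by (cases n) auto
  then have S: "S = row_weight A ` {..<n}" "finite S" "S \<noteq> {}" unfolding S_def by auto
  have "0 < Min S"
    using S Min_in[OF S(2,3)] row_weight_pos[OF A_dim] no_zero_row by auto
  moreover have "0 \<le> a $ k" if "k < 2 * n" for k
    by (rule row_stochastic_simple_eigenvalue_left_fixed_nonneg[OF A_sde_carrier[OF A_dim]
          A_sde_row_stochastic[OF A_dim no_zero_row] _ a_dim a_left _ that])
      (use simple1 a_sum in \<open>auto simp: simple_eigenvalue_def\<close>)
  then have "Min S \<le> (\<Sum>k<2 * n. a $ k * row_weight A (k mod n))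
      \<and> (\<Sum>k<2 * n. a $ k * row_weight A (k mod n)) \<le> Max S"
    by (intro convex_combination_between_Min_Max) (use S a_sum \<open>0 < n\<close> in auto)
  moreover have "a \<bullet> vec (2 * n) (\<lambda>k. row_weight A (k mod n))
      = (\<Sum>k<2 * n. a $ k * row_weight A (k mod n))"
    using a_dim by (auto simp: scalar_prod_def lessThan_atLeast0 intro!: sum.cong)
  ultimately show ?thesis unfolding S_def by simp
qed

end
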